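(* Let $n=rk$, $f:\mathbb{F}_{2^n}\to\mathbb{F}_{2^k}$, $i\in\{0,\dots,k-1\}$ and $b\in\mathbb{F}_{2^k}$. If $\gamma_1,\gamma_2,\gamma_3\in\mathbb{F}_{2^n}^*$ are $(i,b)$-Frobenius translators of $f$ with $\gamma_1+\gamma_2+\gamma_3\neq 0$, then $\gamma_1+\gamma_2+\gamma_3$ is an $(i,b)$-Frobenius translator of $f$.
   Context: For $n=rk$, a function $f:\mathbb{F}_{p^n}\to\mathbb{F}_{p^k}$, an element $\gamma\in\mathbb{F}_{p^n}^*$, an element $b\in\mathbb{F}_{p^k}$ and $i\in\{0,\dots,k-1\}$, $\gamma$ is called an $(i,b)$-Frobenius translator of $f$ if $f(x+u\gamma)-f(x)=u^{p^i}b$ for all $x\in\mathbb{F}_{p^n}$ and all $u\in\mathbb{F}_{p^k}$. Here $p=2$. *)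

theory Defs
  imports Main
begin

text \<open>The finite field F_{p^n} is modelled by a finite field type 'a with
  CARD('a) = p^n and characteristic p.  For k dividing n, F_{p^k} is the unique
  subfield of order p^k, i.e. the set of elements fixed by x \<mapsto> x^(p^k).\<close>

definition subfield_pk :: "nat \<Rightarrow> nat \<Rightarrow> 'a::field set" where
  "subfield_pk p k = {x. x ^ (p ^ k) = x}"

definition frobenius_translator ::
  "nat \<Rightarrow> nat \<Rightarrow> ('a::field \<Rightarrow> 'a) \<Rightarrow> 'a \<Rightarrow> nat \<Rightarrow> 'a \<Rightarrow> bool" where
  "frobenius_translator p k f \<gamma> i b \<longleftrightarrow>
     \<gamma> \<noteq> 0 \<and>
     (\<forall>x. \<forall>u \<in> subfield_pk p k. f (x + u * \<gamma>) - f x = u ^ (p ^ i) * b)"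

end

theory Submission
  imports Defs
begin

text \<open>Differences along a fixed direction telescope: translating by \<open>u * (\<gamma>1 + \<gamma>2)\<close> is
  translating by \<open>u * \<gamma>1\<close> and then by \<open>u * \<gamma>2\<close>, so the increments add up. With three
  \<open>(i, b)\<close>-translators the increment is \<open>3 u^(2^i) b\<close>, which is \<open>u^(2^i) b\<close> in characteristic 2.\<close>

lemma increment_add_direction:
  fixes f :: "'a::comm_ring \<Rightarrow> 'b::ab_group_add"
  assumes "\<And>x. f (x + u * \<gamma>1) - f x = c1"
    and "\<And>x. f (x + u * \<gamma>2) - f x = c2"
  shows "f (x + u * (\<gamma>1 + \<gamma>2)) - f x = c1 + c2"
proof -
  have "f (x + u * (\<gamma>1 + \<gamma>2)) - f x
      = (f ((x + u * \<gamma>1) + u * \<gamma>2) - f (x + u * \<gamma>1)) + (f (x + u * \<gamma>1) - f x)"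
    by (simp add: distrib_left add.assoc)
  then show ?thesis
    using assms by simp
qed

lemma triple_eq_self_char2:
  fixes c :: "'a::ring_1"
  assumes "(2::'a) = 0"
  shows "c + c + c = c"
proof -
  have "c + c + c = c + 2 * c"
    by (simp add: mult_2)
  then show ?thesis
    using assms by simp
qed

theorem corollary1:
  fixes f :: "'a::{field,finite} \<Rightarrow> 'a"
    and n r k i :: nat and b \<gamma>1 \<gamma>2 \<gamma>3 :: 'a
  assumes char2: "(2::'a) = 0"
    and card: "card (UNIV :: 'a set) = 2 ^ n"
    and nrk: "n = r * k" and kpos: "0 < k" and rpos: "0 < r"
    and frange: "\<forall>x. f x \<in> subfield_pk 2 k"
    and i: "i < k"
    and b: "b \<in> subfield_pk 2 k"
    and t1: "frobenius_translator 2 k f \<gamma>1 i b"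
    and t2: "frobenius_translator 2 k f \<gamma>2 i b"
    and t3: "frobenius_translator 2 k f \<gamma>3 i b"
    and nz: "\<gamma>1 + \<gamma>2 + \<gamma>3 \<noteq> 0"
  shows "frobenius_translator 2 k f (\<gamma>1 + \<gamma>2 + \<gamma>3) i b"
proof -
  have "f (x + u * (\<gamma>1 + \<gamma>2 + \<gamma>3)) - f x = u ^ 2 ^ i * b"
    if u: "u \<in> subfield_pk 2 k" for x u
  proof -
    have step: "\<And>\<gamma> x. frobenius_translator 2 k f \<gamma> i b \<Longrightarrow> f (x + u * \<gamma>) - f x = u ^ 2 ^ i * b"
      using u by (simp add: frobenius_translator_def)
    have "f (x + u * (\<gamma>1 + \<gamma>2 + \<gamma>3)) - f x = u ^ 2 ^ i * b + u ^ 2 ^ i * b + u ^ 2 ^ i * b"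
      by (intro increment_add_direction step t1 t2 t3)
    then show ?thesis
      using triple_eq_self_char2 [OF char2] by simp
  qed
  then show ?thesis
    using nz by (simp add: frobenius_translator_def)
qed

end
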